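(* Let $m\ge 2$ and let $\mathcal{R}_m^4$ be the rose graph with $N_m=3m+1$ nodes. For the maximal entropy random walk (MERW) on $\mathcal{R}_m^4$, the stationary probability of the hub node, of any internal node, and of any peripheral node are respectively $$\pi_{\mathrm H}^{\mathrm M}=\frac{m}{2m+2}=\frac{N_m-1}{2(N_m-1)+6},\qquad \pi_{\mathrm I}^{\mathrm M}=\frac{1}{4m}=\frac{3}{4(N_m-1)},\qquad \pi_{\mathrm P}^{\mathrm M}=\frac{1}{2m(m+1)}=\frac{9}{2(N_m+2)(N_m-1)}.$$
   Context: The rose graph $\mathcal{R}_m^4$ ($m\ge2$) is obtained by gluing $m$ cycles of length 4 at a single common node, the hub; it has $3m+1$ nodes. In each 4-cycle, the two neighbours of the hub are internal nodes and the node opposite the hub is the peripheral node. For a connected graph with adjacency matrix $\mathbf{A}=(a_{ij})$, let $\lambda_1$ be the largest eigenvalue of $\mathbf{A}$ and $\psi_1=(\psi_{11},\dots,\psi_{1N})$ the corresponding positive unit eigenvector. The MERW is the Markov chain on nodes with transition probabilities $p_{ij}=\frac{a_{ij}}{\lambda_1}\frac{\psi_{1j}}{\psi_{1i}}$; its stationary distribution is the probability vector $\pi$ with $\pi\mathbf{P}=\pi$. *)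

theory Defs
  imports Complex_Main
begin

text \<open>Rose graph R_m^4 on the node set {0..3m}: node 0 is the hub; for petal k < m
  the internal nodes are 3k+1 and 3k+2 and the peripheral node is 3k+3.
  The 4-cycle of petal k is 0 - 3k+1 - 3k+3 - 3k+2 - 0.\<close>

definition rose_nodes :: "nat \<Rightarrow> nat set" where
  "rose_nodes m = {0..3*m}"

definition rose_edge :: "nat \<Rightarrow> nat \<Rightarrow> nat \<Rightarrow> bool" where
  "rose_edge m i j \<longleftrightarrow> (\<exists>k<m.
      {i, j} = {0, 3*k+1} \<or> {i, j} = {0, 3*k+2} \<or>
      {i, j} = {3*k+1, 3*k+3} \<or> {i, j} = {3*k+2, 3*k+3})"

definition rose_adj :: "nat \<Rightarrow> nat \<Rightarrow> nat \<Rightarrow> real" where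
  "rose_adj m i j = (if rose_edge m i j then 1 else 0)"

definition rose_hub :: nat where "rose_hub = 0"

definition rose_internal :: "nat \<Rightarrow> nat \<Rightarrow> bool" where
  "rose_internal m i \<longleftrightarrow> (\<exists>k<m. i = 3*k+1 \<or> i = 3*k+2)"

definition rose_peripheral :: "nat \<Rightarrow> nat \<Rightarrow> bool" where
  "rose_peripheral m i \<longleftrightarrow> (\<exists>k<m. i = 3*k+3)"

text \<open>Eigenvalues of a real matrix indexed by a finite node set V
  (the adjacency matrix is symmetric, so all eigenvalues are real).\<close>

definition is_eigvec :: "'a set \<Rightarrow> ('a \<Rightarrow> 'a \<Rightarrow> real) \<Rightarrow> real \<Rightarrow> ('a \<Rightarrow> real) \<Rightarrow> bool" where
  "is_eigvec V A lam v \<longleftrightarrow> (\<exists>i\<in>V. v i \<noteq> 0) \<and>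
      (\<forall>i\<in>V. (\<Sum>j\<in>V. A i j * v j) = lam * v i)"

definition eigenvalues :: "'a set \<Rightarrow> ('a \<Rightarrow> 'a \<Rightarrow> real) \<Rightarrow> real set" where
  "eigenvalues V A = {lam. \<exists>v. is_eigvec V A lam v}"

definition merw_P :: "('a \<Rightarrow> 'a \<Rightarrow> real) \<Rightarrow> real \<Rightarrow> ('a \<Rightarrow> real) \<Rightarrow> 'a \<Rightarrow> 'a \<Rightarrow> real" where
  "merw_P A lam1 \<psi> i j = A i j / lam1 * (\<psi> j / \<psi> i)"

definition is_stationary :: "'a set \<Rightarrow> ('a \<Rightarrow> 'a \<Rightarrow> real) \<Rightarrow> ('a \<Rightarrow> real) \<Rightarrow> bool" where
  "is_stationary V P \<pi> \<longleftrightarrow> (\<forall>i\<in>V. \<pi> i \<ge> 0) \<and> (\<Sum>i\<in>V. \<pi> i) = 1 \<and>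
      (\<forall>j\<in>V. (\<Sum>i\<in>V. \<pi> i * P i j) = \<pi> j)"

end

theory Submission
  imports Defs
begin

text \<open>Reading the eigenvalue equation petal by petal, a positive eigenvector forces
  \<open>\<lambda>\<^sup>2 = 2m + 2\<close>, and for this \<open>\<lambda>\<close> every eigenvector is a multiple of the profile \<open>w\<close>
  taking the values \<open>1\<close>, \<open>\<lambda>/(2m)\<close> and \<open>1/m\<close> at the hub, the internal and the
  peripheral nodes. Since the adjacency matrix is symmetric, the quotient \<open>\<pi>/\<psi>\<close> of a
  stationary law of the MERW is again a \<open>\<lambda>\<close>-eigenvector, so \<open>\<pi>\<close> is proportional to
  \<open>w\<^sup>2\<close>, and \<open>\<Sum> w\<^sup>2 = (2m + 2)/m\<close> fixes the constant.\<close>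

lemma merw_stationary_quotient_eigen:
  fixes A :: "'a \<Rightarrow> 'a \<Rightarrow> real"
  assumes sym: "\<And>i j. i \<in> V \<Longrightarrow> j \<in> V \<Longrightarrow> A i j = A j i"
    and pos: "\<forall>i\<in>V. \<psi> i > 0" and "lam \<noteq> 0"
    and stat: "is_stationary V (merw_P A lam \<psi>) \<pi>"
  shows "\<forall>j\<in>V. (\<Sum>i\<in>V. A j i * (\<pi> i / \<psi> i)) = lam * (\<pi> j / \<psi> j)"
proof
  fix j assume j: "j \<in> V"
  have "(\<Sum>i\<in>V. A j i * (\<pi> i / \<psi> i)) * (\<psi> j / lam) = (\<Sum>i\<in>V. \<pi> i * merw_P A lam \<psi> i j)"
    unfolding sum_distrib_right
    by (rule sum.cong) (use sym j pos in \<open>auto simp: merw_P_def mult_ac\<close>)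
  also have "\<dots> = \<pi> j" using stat j unfolding is_stationary_def by blast
  finally show "(\<Sum>i\<in>V. A j i * (\<pi> i / \<psi> i)) = lam * (\<pi> j / \<psi> j)"
    using pos[rule_format, OF j] \<open>lam \<noteq> 0\<close> by (simp add: field_simps)
qed

lemma sum_rose_nodes:
  "(\<Sum>j\<in>rose_nodes m. f j) = f 0 + (\<Sum>k<m. f (3*k+1) + f (3*k+2) + f (3*k+3))"
  for f :: "nat \<Rightarrow> real"
proof (induction m)
  case 0
  then show ?case by (simp add: rose_nodes_def)
next
  case (Suc m)
  have "rose_nodes (Suc m) = insert (3*m+3) (insert (3*m+2) (insert (3*m+1) (rose_nodes m)))"
    by (auto simp: rose_nodes_def)
  then show ?case using Suc by (simp add: rose_nodes_def algebra_simps)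
qed

lemma rose_nodes_cases:
  assumes "i \<in> rose_nodes m"
  obtains "i = 0" | k where "k < m" "i = 3*k+1 \<or> i = 3*k+2 \<or> i = 3*k+3"
proof -
  have "i = 0 \<or> (\<exists>k<m. i = 3*k+1 \<or> i = 3*k+2 \<or> i = 3*k+3)"
  proof (cases "i = 0")
    case False
    then have "(i - 1) div 3 < m \<and> (i = 3*((i - 1) div 3)+1 \<or> i = 3*((i - 1) div 3)+2 \<or> i = 3*((i - 1) div 3)+3)"
      using assms unfolding rose_nodes_def by auto
    then show ?thesis by blast
  qed simp
  then show ?thesis using that by blast
qed

lemma rose_edge_simps:
  "\<not> rose_edge m 0 0"
  "rose_edge m 0 (3*k+1) \<longleftrightarrow> k < m"
  "rose_edge m 0 (3*k+2) \<longleftrightarrow> k < m"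
  "\<not> rose_edge m 0 (3*k+3)"
  "rose_edge m (3*k+1) 0 \<longleftrightarrow> k < m"
  "\<not> rose_edge m (3*k+1) (3*k'+1)"
  "\<not> rose_edge m (3*k+1) (3*k'+2)"
  "rose_edge m (3*k+1) (3*k'+3) \<longleftrightarrow> k < m \<and> k' = k"
  "rose_edge m (3*k+2) 0 \<longleftrightarrow> k < m"
  "\<not> rose_edge m (3*k+2) (3*k'+1)"
  "\<not> rose_edge m (3*k+2) (3*k'+2)"
  "rose_edge m (3*k+2) (3*k'+3) \<longleftrightarrow> k < m \<and> k' = k"
  "\<not> rose_edge m (3*k+3) 0"
  "rose_edge m (3*k+3) (3*k'+1) \<longleftrightarrow> k < m \<and> k' = k"
  "rose_edge m (3*k+3) (3*k'+2) \<longleftrightarrow> k < m \<and> k' = k"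
  "\<not> rose_edge m (3*k+3) (3*k'+3)"
  unfolding rose_edge_def by (auto simp: doubleton_eq_iff; presburger)+

lemma rose_adj_sym: "rose_adj m i j = rose_adj m j i"
  unfolding rose_adj_def rose_edge_def by (simp add: insert_commute)

lemma rose_adj_rows:
  "(\<Sum>j\<in>rose_nodes m. rose_adj m 0 j * v j) = (\<Sum>k<m. v (3*k+1) + v (3*k+2))"
  "k < m \<Longrightarrow> (\<Sum>j\<in>rose_nodes m. rose_adj m (3*k+1) j * v j) = v 0 + v (3*k+3)"
  "k < m \<Longrightarrow> (\<Sum>j\<in>rose_nodes m. rose_adj m (3*k+2) j * v j) = v 0 + v (3*k+3)"
  "k < m \<Longrightarrow> (\<Sum>j\<in>rose_nodes m. rose_adj m (3*k+3) j * v j) = v (3*k+1) + v (3*k+2)"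
  unfolding sum_rose_nodes rose_adj_def
  by (simp_all only: rose_edge_simps if_True if_False)
    (simp_all add: sum.distrib if_distrib[where f="\<lambda>x. x * _"] sum.If_cases)

lemma rose_eigen_hub:
  assumes "\<forall>i\<in>rose_nodes m. (\<Sum>j\<in>rose_nodes m. rose_adj m i j * v j) = l * v i"
  shows "l * v 0 = (\<Sum>k<m. v (3*k+1) + v (3*k+2))"
  using assms rose_adj_rows(1)[of m v] by (simp add: rose_nodes_def)

lemma rose_eigen_petal:
  assumes eq: "\<forall>i\<in>rose_nodes m. (\<Sum>j\<in>rose_nodes m. rose_adj m i j * v j) = l * v i"
    and k: "k < m" and "l \<noteq> 0"
  shows "v (3*k+2) = v (3*k+1)" "l * v (3*k+3) = 2 * v (3*k+1)"
    "(l\<^sup>2 - 2) * v (3*k+1) = l * v 0"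
proof -
  have nodes: "3*k+1 \<in> rose_nodes m" "3*k+2 \<in> rose_nodes m" "3*k+3 \<in> rose_nodes m"
    using k by (auto simp: rose_nodes_def)
  have internal1: "l * v (3*k+1) = v 0 + v (3*k+3)"
    using eq[rule_format, OF nodes(1)] rose_adj_rows(2)[OF k, of v] by simp
  have internal2: "l * v (3*k+2) = v 0 + v (3*k+3)"
    using eq[rule_format, OF nodes(2)] rose_adj_rows(3)[OF k, of v] by simp
  have peripheral: "l * v (3*k+3) = v (3*k+1) + v (3*k+2)"
    using eq[rule_format, OF nodes(3)] rose_adj_rows(4)[OF k, of v] by simp
  have "l * v (3*k+2) = l * v (3*k+1)" using internal1 internal2 by simp
  then show twin: "v (3*k+2) = v (3*k+1)" using \<open>l \<noteq> 0\<close> by simp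
  show "l * v (3*k+3) = 2 * v (3*k+1)" using peripheral twin by simp
  then show "(l\<^sup>2 - 2) * v (3*k+1) = l * v 0"
    using internal1 by (simp add: algebra_simps power2_eq_square)
qed

lemma rose_positive_eigvec_eigenvalue:
  assumes eq: "\<forall>i\<in>rose_nodes m. (\<Sum>j\<in>rose_nodes m. rose_adj m i j * \<psi> j) = l * \<psi> i"
    and pos: "\<forall>i\<in>rose_nodes m. \<psi> i > 0" and "m > 0"
  shows "l > 0" "l\<^sup>2 = 2 * real m + 2"
proof -
  have nodes: "0 \<in> rose_nodes m" "\<And>k. k < m \<Longrightarrow> 3*k+1 \<in> rose_nodes m \<and> 3*k+2 \<in> rose_nodes m"
    by (auto simp: rose_nodes_def)
  have "(\<Sum>k<m. \<psi> (3*k+1) + \<psi> (3*k+2)) > 0"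
    using \<open>m > 0\<close> nodes pos by (intro sum_pos) (auto intro: add_pos_pos)
  then have hub_pos: "l * \<psi> 0 > 0" using rose_eigen_hub[OF eq] by simp
  moreover have "\<psi> 0 > 0" using pos nodes(1) by blast
  ultimately show "l > 0" by (simp add: zero_less_mult_iff)
  then have "l \<noteq> 0" by simp
  have petal: "(l\<^sup>2 - 2) * \<psi> (3*k+1) = l * \<psi> 0" if "k < m" for k
    using rose_eigen_petal(3)[OF eq that \<open>l \<noteq> 0\<close>] .
  have twin: "\<psi> (3*k+2) = \<psi> (3*k+1)" if "k < m" for k
    using rose_eigen_petal(1)[OF eq that \<open>l \<noteq> 0\<close>] .
  have "l\<^sup>2 - 2 \<noteq> 0" using petal[OF \<open>m > 0\<close>] hub_pos by auto
  have "\<psi> (3*k+1) = l * \<psi> 0 / (l\<^sup>2 - 2)" if "k < m" for k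
    using petal[OF that] \<open>l\<^sup>2 - 2 \<noteq> 0\<close> by (simp add: eq_divide_eq mult.commute)
  then have "(\<Sum>k<m. \<psi> (3*k+1) + \<psi> (3*k+2)) = (\<Sum>k<m. 2 * (l * \<psi> 0 / (l\<^sup>2 - 2)))"
    using twin by (intro sum.cong) simp_all
  then have "l * \<psi> 0 = real m * (2 * (l * \<psi> 0 / (l\<^sup>2 - 2)))"
    using rose_eigen_hub[OF eq] by simp
  then have "(l * \<psi> 0) * (l\<^sup>2 - 2) = (l * \<psi> 0) * (2 * real m)"
    using \<open>l\<^sup>2 - 2 \<noteq> 0\<close> by (simp add: field_simps)
  then have "l\<^sup>2 - 2 = 2 * real m" using hub_pos by auto
  then show "l\<^sup>2 = 2 * real m + 2" by simp
qed

definition rose_weight :: "nat \<Rightarrow> real \<Rightarrow> nat \<Rightarrow> real" where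
  "rose_weight m l i = (if i = 0 then 1 else if i mod 3 = 0 then 1 / real m else l / (2 * real m))"

text \<open>Stated in simp normal form, where \<open>3*k+1\<close> becomes \<open>Suc (3*k)\<close>.\<close>

lemma rose_weight_simps:
  "rose_weight m l 0 = 1"
  "rose_weight m l (Suc (3*k)) = l / (2 * real m)"
  "rose_weight m l (Suc (Suc (3*k))) = l / (2 * real m)"
  "rose_weight m l (3*k+3) = 1 / real m"
  unfolding rose_weight_def by (simp_all add: mod_Suc)

lemma rose_eigvec_eq_weight:
  assumes eq: "\<forall>i\<in>rose_nodes m. (\<Sum>j\<in>rose_nodes m. rose_adj m i j * v j) = l * v i"
    and l2: "l\<^sup>2 = 2 * real m + 2" and "m > 0" and i: "i \<in> rose_nodes m"
  shows "v i = v 0 * rose_weight m l i"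
proof -
  have "l \<noteq> 0" using l2 by auto
  show ?thesis using i
  proof (cases rule: rose_nodes_cases)
    case 1
    then show ?thesis by (simp add: rose_weight_simps)
  next
    case (2 k)
    note petal = rose_eigen_petal[OF eq \<open>k < m\<close> \<open>l \<noteq> 0\<close>]
    have internal: "v (3*k+1) = v 0 * (l / (2 * real m))"
      using petal(3) l2 \<open>m > 0\<close> by (simp add: field_simps)
    have "l * v (3*k+3) = l * (v 0 / real m)"
      using petal(2) internal \<open>m > 0\<close> by (simp add: field_simps)
    then have "v (3*k+3) = v 0 / real m" using \<open>l \<noteq> 0\<close> by (metis mult_left_cancel)
    then show ?thesis using 2 internal petal(1) by (auto simp: rose_weight_simps)
  qed
qed

lemma sum_rose_weight_sq:
  assumes "l\<^sup>2 = 2 * real m + 2" and "m > 0"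
  shows "(\<Sum>i\<in>rose_nodes m. (rose_weight m l i)\<^sup>2) = (2 * real m + 2) / real m"
proof -
  have "(\<Sum>i\<in>rose_nodes m. (rose_weight m l i)\<^sup>2)
      = 1 + real m * (2 * (l\<^sup>2 / (4 * real m ^ 2)) + 1 / real m ^ 2)"
    by (simp add: sum_rose_nodes rose_weight_simps power_divide)
  also have "\<dots> = (2 * real m + 2) / real m"
    using assms by (simp add: field_simps power2_eq_square)
  finally show ?thesis .
qed

lemma rose_merw_stationary:
  assumes eq: "\<forall>i\<in>rose_nodes m. (\<Sum>j\<in>rose_nodes m. rose_adj m i j * \<psi> j) = l * \<psi> i"
    and pos: "\<forall>i\<in>rose_nodes m. \<psi> i > 0" and "m > 0"
    and stat: "is_stationary (rose_nodes m) (merw_P (rose_adj m) l \<psi>) \<pi>"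
    and i: "i \<in> rose_nodes m"
  shows "\<pi> i = real m / (2 * real m + 2) * (rose_weight m l i)\<^sup>2"
proof -
  have l: "l > 0" "l\<^sup>2 = 2 * real m + 2"
    using rose_positive_eigvec_eigenvalue[OF eq pos \<open>m > 0\<close>] by auto
  define u where "u j = \<pi> j / \<psi> j" for j
  have equ: "\<forall>j\<in>rose_nodes m. (\<Sum>i\<in>rose_nodes m. rose_adj m j i * u i) = l * u j"
    unfolding u_def using merw_stationary_quotient_eigen[OF _ pos _ stat] rose_adj_sym l(1)
    by simp
  define c where "c = u 0 * \<psi> 0"
  have \<pi>_weight: "\<pi> j = c * (rose_weight m l j)\<^sup>2" if "j \<in> rose_nodes m" for j
  proof -
    have "\<pi> j = u j * \<psi> j" using pos[rule_format, OF that] by (simp add: u_def)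
    then show ?thesis
      using rose_eigvec_eq_weight[OF equ l(2) \<open>m > 0\<close> that]
        rose_eigvec_eq_weight[OF eq l(2) \<open>m > 0\<close> that]
      by (simp add: c_def power2_eq_square)
  qed
  have "1 = (\<Sum>j\<in>rose_nodes m. \<pi> j)" using stat by (simp add: is_stationary_def)
  also have "\<dots> = c * ((2 * real m + 2) / real m)"
    using \<pi>_weight sum_rose_weight_sq[OF l(2) \<open>m > 0\<close>] by (simp add: sum_distrib_left[symmetric])
  finally have "c = real m / (2 * real m + 2)" using \<open>m > 0\<close> by (simp add: field_simps)
  then show ?thesis using \<pi>_weight[OF i] by simp
qed

lemma rose_merw_stationary_values:
  assumes eq: "\<forall>i\<in>rose_nodes m. (\<Sum>j\<in>rose_nodes m. rose_adj m i j * \<psi> j) = l * \<psi> i"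
    and pos: "\<forall>i\<in>rose_nodes m. \<psi> i > 0" and "m > 0"
    and stat: "is_stationary (rose_nodes m) (merw_P (rose_adj m) l \<psi>) \<pi>"
  shows "\<pi> rose_hub = real m / (2 * real m + 2)"
    and "rose_internal m i \<Longrightarrow> \<pi> i = 1 / (4 * real m)"
    and "rose_peripheral m i \<Longrightarrow> \<pi> i = 1 / (2 * real m * (real m + 1))"
proof -
  have l2: "l\<^sup>2 = 2 * real m + 2"
    using rose_positive_eigvec_eigenvalue[OF eq pos \<open>m > 0\<close>] by simp
  note \<pi>_nodes = rose_merw_stationary[OF eq pos \<open>m > 0\<close> stat]
  show "\<pi> rose_hub = real m / (2 * real m + 2)"
    using \<pi>_nodes[of 0] by (simp add: rose_hub_def rose_nodes_def rose_weight_simps)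
  show "\<pi> i = 1 / (4 * real m)" if "rose_internal m i"
  proof -
    obtain k where "k < m" "i = 3*k+1 \<or> i = 3*k+2"
      using \<open>rose_internal m i\<close> unfolding rose_internal_def by blast
    then have "\<pi> i = real m / (2 * real m + 2) * (l\<^sup>2 / (2 * real m)\<^sup>2)"
      using \<pi>_nodes[of i] by (auto simp: rose_nodes_def rose_weight_simps power_divide)
    then show ?thesis using \<open>m > 0\<close> by (simp add: l2) (simp add: field_simps power2_eq_square)
  qed
  show "\<pi> i = 1 / (2 * real m * (real m + 1))" if "rose_peripheral m i"
  proof -
    obtain k where "k < m" "i = 3*k+3"
      using \<open>rose_peripheral m i\<close> unfolding rose_peripheral_def by blast
    then have "\<pi> i = real m / (2 * real m + 2) * (1 / real m)\<^sup>2"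
      using \<pi>_nodes[of i] by (simp add: rose_nodes_def rose_weight_simps)
    then show ?thesis using \<open>m > 0\<close> by (simp add: field_simps power2_eq_square)
  qed
qed

theorem theorem5:
  fixes m :: nat and lam1 :: real and \<psi> \<pi> :: "nat \<Rightarrow> real"
  assumes "m \<ge> 2"
    and "is_arg_max id (\<lambda>x. x \<in> eigenvalues (rose_nodes m) (rose_adj m)) lam1"
    and "is_eigvec (rose_nodes m) (rose_adj m) lam1 \<psi>"
    and "\<forall>i\<in>rose_nodes m. \<psi> i > 0"
    and "(\<Sum>i\<in>rose_nodes m. (\<psi> i)\<^sup>2) = 1"
    and "is_stationary (rose_nodes m) (merw_P (rose_adj m) lam1 \<psi>) \<pi>"
  shows "(let N = real (3*m+1) in
            \<pi> rose_hub = real m / (2*real m + 2) \<and>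
            \<pi> rose_hub = (N - 1) / (2*(N - 1) + 6) \<and>
            (\<forall>i. rose_internal m i \<longrightarrow>
                 \<pi> i = 1 / (4*real m) \<and> \<pi> i = 3 / (4*(N - 1))) \<and>
            (\<forall>i. rose_peripheral m i \<longrightarrow>
                 \<pi> i = 1 / (2*real m*(real m + 1)) \<and>
                 \<pi> i = 9 / (2*(N + 2)*(N - 1))))"
proof -
  have "m > 0" using assms(1) by simp
  have eq: "\<forall>i\<in>rose_nodes m. (\<Sum>j\<in>rose_nodes m. rose_adj m i j * \<psi> j) = lam1 * \<psi> i"
    using assms(3) by (simp add: is_eigvec_def)
  note \<pi>_values = rose_merw_stationary_values[OF eq assms(4) \<open>m > 0\<close> assms(6)]
  have N: "real (3*m+1) - 1 = 3 * real m" "real (3*m+1) + 2 = 3 * (real m + 1)" by simp_all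
  have nine: "2*(3 * (real m + 1))*(3 * real m) = 9 * (2*real m*(real m + 1))"
    by (simp add: algebra_simps)
  have "real m / (2*real m + 2) = 3 * real m / (2*(3 * real m) + 6)"
    "1 / (4*real m) = 3 / (4*(3 * real m))"
    by (simp_all add: field_simps)
  moreover have "1 / (2*real m*(real m + 1)) = 9 / (2*(3 * (real m + 1))*(3 * real m))"
    unfolding nine by simp
  ultimately show ?thesis
    unfolding Let_def N using \<pi>_values by simp
qed

end
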